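(* Let $A_n=1$ if $n=2^{k+1}-2$ for some integer $k\ge0$ and $A_n=0$ otherwise, let $D(n)=\det\left(A_{i+j}\right)_{i,j=0}^{n-1}$ for $n\ge1$, $D(0)=1$ (it is known that $D(n)\in\{1,-1\}$), and let $T_n=\frac{D(n)D(n+2)}{D(n+1)^2}=D(n)D(n+2)$ for $n\ge0$. Then $T_0=1$, $T_1=-1$, and $$T_{2n}=T_{2n-1}T_{n-1}\quad(n\ge1),\qquad T_{2n+1}=-T_{2n}\quad(n\ge0).$$ *)

theory Defs
  imports Complex_Main "Jordan_Normal_Form.Determinant"
begin

definition A :: "nat \<Rightarrow> int" where
  "A n = (if \<exists>k::nat. n = 2 ^ (k + 1) - 2 then 1 else 0)"

definition D :: "nat \<Rightarrow> int" where
  "D n = (if n = 0 then 1 else det (mat n n (\<lambda>(i, j). A (i + j))))"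

definition T :: "nat \<Rightarrow> real" where
  "T n = real_of_int (D n) * real_of_int (D (n + 2)) / (real_of_int (D (n + 1)))^2"

end

(* A vanishes at odd indices and satisfies A (2k + 2) = A k.  Listing even indices before
   odd ones therefore splits the Hankel matrix of D n into two diagonal blocks, so that
   D n = E ((n + 1) div 2) * D (n div 2), where E m is the Hankel determinant of k -> A (2k).
   Subtracting the leading 1 from this sequence leaves a sequence supported on odd indices,
   whose Hankel determinants are 0 in odd size and (-1)^p times a square in size 2p; the
   first-row expansion gives E (2p) = (-1)^p E p ^ 2 and E (2p + 1) = (-1)^p D p ^ 2.
   By induction D n = 1 or -1 and E m = (-1)^(m div 2), so D (2n) and D (2n + 1) are +-D n
   with explicit signs, and the recurrences for T n = D n * D (n + 2) compare these signs. *)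

theory Submission
  imports Defs
begin

definition hankel :: "(nat \<Rightarrow> 'a) \<Rightarrow> nat \<Rightarrow> 'a mat" where
  "hankel f n = mat n n (\<lambda>(i, j). f (i + j))"

lemma hankel_carrier [simp]: "hankel f n \<in> carrier_mat n n"
  by (simp add: hankel_def)

lemma dim_hankel [simp]: "dim_row (hankel f n) = n" "dim_col (hankel f n) = n"
  by (simp_all add: hankel_def)

lemma index_hankel [simp]: "i < n \<Longrightarrow> j < n \<Longrightarrow> hankel f n $$ (i, j) = f (i + j)"
  by (simp add: hankel_def)

lemma det_permute_rows_cols:
  fixes A :: "'a :: comm_ring_1 mat"
  assumes A: "A \<in> carrier_mat n n" and p: "p permutes {0..<n}"
  shows "det (mat n n (\<lambda>(i, j). A $$ (p i, p j))) = det A"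
proof -
  define B where "B = mat n n (\<lambda>(i, j). A $$ (i, p j))"
  have B: "B \<in> carrier_mat n n" by (simp add: B_def)
  have p_less: "i < n \<Longrightarrow> p i < n" for i
    using p by (simp add: permutes_in_image)
  have "B\<^sup>T = mat n n (\<lambda>(i, j). A\<^sup>T $$ (p i, j))"
    by (rule eq_matI) (use A in \<open>auto simp: B_def p_less\<close>)
  then have "det B = signof p * det A"
    using det_permute_rows[of "A\<^sup>T" n p] p A
    by (simp add: det_transpose[OF B, symmetric] det_transpose)
  moreover have "mat n n (\<lambda>(i, j). A $$ (p i, p j)) = mat n n (\<lambda>(i, j). B $$ (p i, j))"
    by (rule eq_matI) (auto simp: B_def p_less)
  ultimately show ?thesis
    using det_permute_rows[OF B p] by (simp add: mult.assoc[symmetric] flip: of_int_mult)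
qed

definition evens_then_odds :: "nat \<Rightarrow> nat \<Rightarrow> nat" where
  "evens_then_odds n k =
     (if k < (n + 1) div 2 then 2 * k else if k < n then 2 * (k - (n + 1) div 2) + 1 else k)"

lemma evens_then_odds_permutes: "evens_then_odds n permutes {0..<n}"
proof (rule bij_imp_permutes)
  have into: "evens_then_odds n ` {0..<n} \<subseteq> {0..<n}"
    by (auto simp: evens_then_odds_def)
  have inj: "inj_on (evens_then_odds n) {0..<n}"
    unfolding inj_on_def evens_then_odds_def by auto presburger+
  have "evens_then_odds n ` {0..<n} = {0..<n}"
    by (rule endo_inj_surj[OF _ into inj]) simp
  with inj show "bij_betw (evens_then_odds n) {0..<n} {0..<n}"
    by (simp add: bij_betw_def)
  show "\<And>k. k \<notin> {0..<n} \<Longrightarrow> evens_then_odds n k = k"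
    by (simp add: evens_then_odds_def)
qed

lemma mat_evens_then_odds:
  fixes M :: "'a mat" and n :: nat
  defines "h \<equiv> (n + 1) div 2" and "m \<equiv> n div 2"
  shows "mat n n (\<lambda>(i, j). M $$ (evens_then_odds n i, evens_then_odds n j)) =
    four_block_mat
      (mat h h (\<lambda>(i, j). M $$ (2 * i, 2 * j))) (mat h m (\<lambda>(i, j). M $$ (2 * i, 2 * j + 1)))
      (mat m h (\<lambda>(i, j). M $$ (2 * i + 1, 2 * j))) (mat m m (\<lambda>(i, j). M $$ (2 * i + 1, 2 * j + 1)))"
  by (rule eq_matI) (auto simp: evens_then_odds_def h_def m_def)

lemma det_checkerboard:
  fixes M :: "'a :: idom mat"
  assumes M: "M \<in> carrier_mat n n"
    and zero: "\<And>i j. i < n \<Longrightarrow> j < n \<Longrightarrow> odd (i + j) \<Longrightarrow> M $$ (i, j) = 0"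
  shows "det M = det (mat ((n + 1) div 2) ((n + 1) div 2) (\<lambda>(i, j). M $$ (2 * i, 2 * j)))
               * det (mat (n div 2) (n div 2) (\<lambda>(i, j). M $$ (2 * i + 1, 2 * j + 1)))"
proof -
  have "mat ((n + 1) div 2) (n div 2) (\<lambda>(i, j). M $$ (2 * i, 2 * j + 1))
      = 0\<^sub>m ((n + 1) div 2) (n div 2)"
    and "mat (n div 2) ((n + 1) div 2) (\<lambda>(i, j). M $$ (2 * i + 1, 2 * j))
      = 0\<^sub>m (n div 2) ((n + 1) div 2)"
    by (auto intro!: eq_matI zero)
  then have "det M = det (four_block_mat
      (mat ((n + 1) div 2) ((n + 1) div 2) (\<lambda>(i, j). M $$ (2 * i, 2 * j)))
      (0\<^sub>m ((n + 1) div 2) (n div 2)) (0\<^sub>m (n div 2) ((n + 1) div 2))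
      (mat (n div 2) (n div 2) (\<lambda>(i, j). M $$ (2 * i + 1, 2 * j + 1))))"
    using det_permute_rows_cols[OF M evens_then_odds_permutes]
    by (simp add: mat_evens_then_odds)
  also have "\<dots> = det (mat ((n + 1) div 2) ((n + 1) div 2) (\<lambda>(i, j). M $$ (2 * i, 2 * j)))
      * det (mat (n div 2) (n div 2) (\<lambda>(i, j). M $$ (2 * i + 1, 2 * j + 1)))"
    by (rule det_four_block_mat_lower_left_zero) auto
  finally show ?thesis .
qed

lemma det_anti_checkerboard_even:
  fixes M :: "'a :: idom mat"
  assumes M: "M \<in> carrier_mat (2 * p) (2 * p)"
    and zero: "\<And>i j. i < 2 * p \<Longrightarrow> j < 2 * p \<Longrightarrow> even (i + j) \<Longrightarrow> M $$ (i, j) = 0"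
  shows "det M = (-1) ^ p * det (mat p p (\<lambda>(i, j). M $$ (2 * i, 2 * j + 1)))
               * det (mat p p (\<lambda>(i, j). M $$ (2 * i + 1, 2 * j)))"
proof -
  define X where "X = mat p p (\<lambda>(i, j). M $$ (2 * i, 2 * j + 1))"
  define Y where "Y = mat p p (\<lambda>(i, j). M $$ (2 * i + 1, 2 * j))"
  define B where "B = four_block_mat (0\<^sub>m p p) X Y (0\<^sub>m p p)"
  have B: "B \<in> carrier_mat (p + p) (p + p)"
    by (simp add: B_def X_def Y_def)
  have "mat p p (\<lambda>(i, j). M $$ (2 * i, 2 * j)) = 0\<^sub>m p p"
    and "mat p p (\<lambda>(i, j). M $$ (2 * i + 1, 2 * j + 1)) = 0\<^sub>m p p"
    by (auto intro!: eq_matI zero)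
  then have "det M = det B"
    using det_permute_rows_cols[OF M evens_then_odds_permutes]
    by (simp add: mat_evens_then_odds B_def X_def Y_def)
  also have "\<dots> = (-1) ^ (p * p) * det (mat (p + p) (p + p)
      (\<lambda>(i, j). B $$ (i, if j < p then j + p else j - p)))"
    by (rule det_swap_cols[OF B])
  also have "mat (p + p) (p + p) (\<lambda>(i, j). B $$ (i, if j < p then j + p else j - p))
      = four_block_mat X (0\<^sub>m p p) (0\<^sub>m p p) Y"
    by (rule eq_matI) (auto simp: B_def X_def Y_def)
  also have "det (four_block_mat X (0\<^sub>m p p) (0\<^sub>m p p) Y) = det X * det Y"
    by (rule det_four_block_mat_lower_left_zero) (auto simp: X_def Y_def)
  finally show ?thesis
    by (simp add: X_def Y_def minus_one_power_iff)
qed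

lemma permutes_ex_even_add:
  fixes p :: "nat \<Rightarrow> nat"
  assumes p: "p permutes {0..<n}" and "odd n"
  shows "\<exists>i<n. even (i + p i)"
proof (rule ccontr)
  assume "\<not> ?thesis"
  then have all_odd: "{i \<in> {0..<n}. odd (i + p i)} = {0..<n}"
    by auto
  have "even (\<Sum>i\<in>{0..<n}. i + p i) \<longleftrightarrow> even (card {i \<in> {0..<n}. odd (i + p i)})"
    by (rule even_sum_iff) simp
  then have "odd (\<Sum>i\<in>{0..<n}. i + p i)"
    using \<open>odd n\<close> unfolding all_odd by simp
  moreover have "(\<Sum>i\<in>{0..<n}. i + p i) = 2 * (\<Sum>i\<in>{0..<n}. i)"
    using sum.permute[OF p, of "\<lambda>i. i"] by (simp add: sum.distrib comp_def)
  ultimately show False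
    by simp
qed

lemma det_anti_checkerboard_odd:
  fixes M :: "'a :: comm_ring_1 mat"
  assumes M: "M \<in> carrier_mat n n" and "odd n"
    and zero: "\<And>i j. i < n \<Longrightarrow> j < n \<Longrightarrow> even (i + j) \<Longrightarrow> M $$ (i, j) = 0"
  shows "det M = 0"
proof -
  have "(\<Prod>i = 0..<n. M $$ (i, p i)) = 0" if p: "p permutes {0..<n}" for p
  proof -
    obtain i where "i < n" "even (i + p i)"
      using permutes_ex_even_add[OF p \<open>odd n\<close>] by blast
    moreover have "p i < n"
      using p \<open>i < n\<close> by (simp add: permutes_in_image)
    ultimately show ?thesis
      by (intro prod_zero) (auto intro!: bexI[of _ i] zero)
  qed
  then show ?thesis
    by (simp add: det_def'[OF M])
qed

lemma det_hankel_Suc: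
  fixes f :: "nat \<Rightarrow> 'a :: comm_ring_1"
  shows "det (hankel f (Suc n))
    = det (hankel (f(0 := 0)) (Suc n)) + f 0 * det (hankel (\<lambda>k. f (k + 2)) n)"
proof -
  \<comment> \<open>f 0 only enters the corner entry, so the two first-row expansions differ
    by f 0 times its cofactor.\<close>
  define H where "H = hankel f (Suc n)"
  define C where "C = hankel (f(0 := 0)) (Suc n)"
  have same_cofactor: "cofactor H 0 j = cofactor C 0 j" for j
  proof -
    have "mat_delete H 0 j = mat_delete C 0 j"
      by (rule eq_matI) (auto simp: mat_delete_def H_def C_def)
    then show ?thesis
      by (simp add: cofactor_def)
  qed
  have "mat_delete C 0 0 = hankel (\<lambda>k. f (k + 2)) n"
    by (rule eq_matI) (auto simp: mat_delete_def C_def)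
  then have cofactor_corner: "cofactor C 0 0 = det (hankel (\<lambda>k. f (k + 2)) n)"
    by (simp add: cofactor_def)
  have first_row: "H $$ (0, j) = C $$ (0, j) + (if j = 0 then f 0 else 0)" if "j < Suc n" for j
    using that by (simp add: H_def C_def)
  have "det H = (\<Sum>j<Suc n. H $$ (0, j) * cofactor H 0 j)"
    by (rule laplace_expansion_row) (simp_all add: H_def)
  also have "\<dots> = (\<Sum>j<Suc n. C $$ (0, j) * cofactor C 0 j + (if j = 0 then f 0 * cofactor C 0 0 else 0))"
    by (rule sum.cong) (auto simp: first_row same_cofactor algebra_simps)
  also have "\<dots> = det C + f 0 * cofactor C 0 0"
    using laplace_expansion_row[of C "Suc n" 0] by (simp add: C_def sum.distrib del: sum.lessThan_Suc)
  finally show ?thesis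
    using cofactor_corner by (simp add: H_def C_def)
qed

lemma det_hankel_even_support:
  fixes f :: "nat \<Rightarrow> 'a :: idom"
  assumes "\<And>k. odd k \<Longrightarrow> f k = 0"
  shows "det (hankel f n)
    = det (hankel (\<lambda>k. f (2 * k)) ((n + 1) div 2)) * det (hankel (\<lambda>k. f (2 * k + 2)) (n div 2))"
proof -
  have "mat ((n + 1) div 2) ((n + 1) div 2) (\<lambda>(i, j). hankel f n $$ (2 * i, 2 * j))
      = hankel (\<lambda>k. f (2 * k)) ((n + 1) div 2)"
    by (rule eq_matI) (auto simp: algebra_simps)
  moreover have "mat (n div 2) (n div 2) (\<lambda>(i, j). hankel f n $$ (2 * i + 1, 2 * j + 1))
      = hankel (\<lambda>k. f (2 * k + 2)) (n div 2)"
    by (rule eq_matI) (auto simp: algebra_simps)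
  moreover have "det (hankel f n)
      = det (mat ((n + 1) div 2) ((n + 1) div 2) (\<lambda>(i, j). hankel f n $$ (2 * i, 2 * j)))
      * det (mat (n div 2) (n div 2) (\<lambda>(i, j). hankel f n $$ (2 * i + 1, 2 * j + 1)))"
    by (rule det_checkerboard) (simp_all add: assms)
  ultimately show ?thesis
    by simp
qed

lemma det_hankel_odd_support_even_size:
  fixes f :: "nat \<Rightarrow> 'a :: idom"
  assumes "\<And>k. even k \<Longrightarrow> f k = 0"
  shows "det (hankel f (2 * p)) = (-1) ^ p * det (hankel (\<lambda>k. f (2 * k + 1)) p) ^ 2"
proof -
  have "mat p p (\<lambda>(i, j). hankel f (2 * p) $$ (2 * i, 2 * j + 1)) = hankel (\<lambda>k. f (2 * k + 1)) p"
    and "mat p p (\<lambda>(i, j). hankel f (2 * p) $$ (2 * i + 1, 2 * j)) = hankel (\<lambda>k. f (2 * k + 1)) p"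
    by (auto intro!: eq_matI simp: algebra_simps)
  moreover have "det (hankel f (2 * p))
      = (-1) ^ p * det (mat p p (\<lambda>(i, j). hankel f (2 * p) $$ (2 * i, 2 * j + 1)))
      * det (mat p p (\<lambda>(i, j). hankel f (2 * p) $$ (2 * i + 1, 2 * j)))"
    by (rule det_anti_checkerboard_even) (simp_all add: assms)
  ultimately show ?thesis
    by (simp add: power2_eq_square)
qed

lemma det_hankel_odd_support_odd_size:
  fixes f :: "nat \<Rightarrow> 'a :: comm_ring_1"
  assumes "\<And>k. even k \<Longrightarrow> f k = 0"
  shows "det (hankel f (2 * p + 1)) = 0"
  by (rule det_anti_checkerboard_odd[of _ "2 * p + 1"]) (simp_all add: assms)

lemma A_altdef: "A n = (if \<exists>j. n + 2 = 2 ^ (j + 1) then 1 else 0)"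
proof -
  have "n = 2 ^ (j + 1) - 2 \<longleftrightarrow> n + 2 = 2 ^ (j + 1)" for j
  proof -
    have "(2::nat) \<le> 2 ^ (j + 1)"
      using one_le_power[of "2::nat" j] by simp
    then show ?thesis
      by arith
  qed
  then show ?thesis
    by (simp add: A_def)
qed

lemma A_0: "A 0 = 1"
  by (auto simp: A_altdef intro: exI[of _ 0])

lemma A_odd:
  assumes "odd n"
  shows "A n = 0"
proof -
  have "n + 2 \<noteq> 2 ^ (j + 1)" for j
  proof -
    have "odd (n + 2)" and "even ((2::nat) ^ (j + 1))"
      using assms by simp_all
    then show ?thesis
      by metis
  qed
  then show ?thesis
    by (simp add: A_altdef)
qed

lemma A_double_Suc_Suc: "A (2 * k + 2) = A k"
proof -
  have "(\<exists>j. 2 * k + 2 + 2 = 2 ^ (j + 1)) \<longleftrightarrow> (\<exists>j. k + 2 = 2 ^ (j + 1))"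
  proof
    assume "\<exists>j. 2 * k + 2 + 2 = 2 ^ (j + 1)"
    then obtain j where "2 * k + 2 + 2 = 2 ^ (j + 1)"
      by blast
    then have "k + 2 = 2 ^ j"
      by (simp; linarith)
    moreover from this have "j \<noteq> 0"
      by (cases j) simp_all
    ultimately show "\<exists>j. k + 2 = 2 ^ (j + 1)"
      by (metis Suc_eq_plus1 not0_implies_Suc)
  next
    assume "\<exists>j. k + 2 = 2 ^ (j + 1)"
    then obtain j where "k + 2 = 2 ^ (j + 1)"
      by blast
    then have "2 * k + 2 + 2 = 2 ^ (j + 1 + 1)"
      by simp
    then show "\<exists>j. 2 * k + 2 + 2 = 2 ^ (j + 1)"
      by blast
  qed
  then show ?thesis
    by (simp add: A_altdef)
qed

lemma A_double_even:
  assumes "even k" and "0 < k"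
  shows "A (2 * k) = 0"
proof -
  obtain m where "k = Suc m"
    using \<open>0 < k\<close> gr0_implies_Suc by blast
  then show ?thesis
    using A_double_Suc_Suc[of m] A_odd[of m] \<open>even k\<close> by simp
qed

definition E :: "nat \<Rightarrow> int" where
  "E m = det (hankel (\<lambda>k. A (2 * k)) m)"

lemma D_eq_det_hankel: "D n = det (hankel A n)"
  by (cases "n = 0") (simp_all add: D_def hankel_def)

lemma D_split: "D n = E ((n + 1) div 2) * D (n div 2)"
  using A_double_Suc_Suc det_hankel_even_support[of A n]
  by (simp add: A_odd D_eq_det_hankel E_def)

lemma E_Suc:
  "E (Suc m)
    = det (hankel ((\<lambda>k. A (2 * k))(0 := 0)) (Suc m)) + det (hankel (\<lambda>k. A (2 * (k + 2))) m)"
  using det_hankel_Suc[of "\<lambda>k. A (2 * k)" m] by (simp add: E_def A_0)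

lemma E_double: "E (2 * p) = (-1) ^ p * E p ^ 2"
proof (cases p)
  case 0
  then show ?thesis
    by (simp add: E_def)
next
  case (Suc q)
  have "det (hankel ((\<lambda>k. A (2 * k))(0 := 0)) (2 * p)) = (-1) ^ p * E p ^ 2"
  proof (subst det_hankel_odd_support_even_size)
    show "((\<lambda>k. A (2 * k))(0 := 0)) k = 0" if "even k" for k
      using that A_double_even[of k] by simp
    have "A (2 * (2 * k + 1)) = A (2 * k)" for k
      using A_double_Suc_Suc[of "2 * k"] by simp
    then show "(-1) ^ p * det (hankel (\<lambda>k. ((\<lambda>k. A (2 * k))(0 := 0)) (2 * k + 1)) p) ^ 2
        = (-1) ^ p * E p ^ 2"
      by (simp add: E_def)
  qed
  moreover have "det (hankel (\<lambda>k. A (2 * (k + 2))) (2 * q + 1)) = 0"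
    by (rule det_hankel_odd_support_odd_size) (use A_double_even[of "_ + 2"] in simp)
  ultimately show ?thesis
    using E_Suc[of "2 * q + 1"] Suc by simp
qed

lemma E_double_Suc: "E (2 * p + 1) = (-1) ^ p * D p ^ 2"
proof -
  have "det (hankel ((\<lambda>k. A (2 * k))(0 := 0)) (2 * p + 1)) = 0"
    by (rule det_hankel_odd_support_odd_size) (use A_double_even in simp)
  moreover have "det (hankel (\<lambda>k. A (2 * (k + 2))) (2 * p)) = (-1) ^ p * D p ^ 2"
  proof (subst det_hankel_odd_support_even_size)
    show "A (2 * (k + 2)) = 0" if "even k" for k
      using that A_double_even[of "k + 2"] by simp
    have "A (2 * (2 * k + 1 + 2)) = A k" for k
      using A_double_Suc_Suc[of "2 * k + 2"] A_double_Suc_Suc[of k] by simp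
    then show "(-1) ^ p * det (hankel (\<lambda>k. A (2 * (2 * k + 1 + 2))) p) ^ 2 = (-1) ^ p * D p ^ 2"
      by (simp add: D_eq_det_hankel)
  qed
  ultimately show ?thesis
    using E_Suc[of "2 * p"] by simp
qed

text \<open>The two claims need a simultaneous induction: E (2p + 1) involves D p,
  and D n involves E ((n + 1) div 2).\<close>

lemma D_square_and_E_eq: "D n ^ 2 = 1 \<and> E n = (-1) ^ (n div 2)"
proof (induction n rule: less_induct)
  case (less n)
  have E_n: "E n = (-1) ^ (n div 2)"
  proof -
    consider "n = 0" | p where "n = 2 * p" "0 < p" | p where "n = 2 * p + 1"
      by (metis evenE oddE gr0I mult_0_right)
    then show ?thesis
    proof cases
      case 1
      then show ?thesis
        by (simp add: E_def)
    next
      case (2 p)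
      then have "E p ^ 2 = 1"
        using less[of p] by (simp flip: power_mult)
      with 2 show ?thesis
        by (simp add: E_double)
    next
      case (3 p)
      then show ?thesis
        using less[of p] E_double_Suc[of p] by simp
    qed
  qed
  have "D n ^ 2 = 1"
  proof (cases "n = 0")
    case True
    then show ?thesis
      by (simp add: D_def)
  next
    case False
    have "E ((n + 1) div 2) = (-1) ^ ((n + 1) div 2 div 2)"
      using less[of "(n + 1) div 2"] E_n by (cases "(n + 1) div 2 = n") auto
    moreover have "D (n div 2) ^ 2 = 1"
      using less[of "n div 2"] False by simp
    ultimately show ?thesis
      by (simp add: D_split[of n] power_mult_distrib flip: power_mult)
  qed
  with E_n show ?case
    by simp
qed

lemma D_square: "D n ^ 2 = 1"
  using D_square_and_E_eq by blast

lemma E_eq: "E n = (-1) ^ (n div 2)"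
  using D_square_and_E_eq by blast

lemma D_double: "D (2 * n) = (-1) ^ (n div 2) * D n"
  using D_split[of "2 * n"] by (simp add: E_eq)

lemma D_double_Suc: "D (2 * n + 1) = (-1) ^ ((n + 1) div 2) * D n"
  using D_split[of "2 * n + 1"] by (simp add: E_eq)

lemma T_eq_D: "T n = of_int (D n * D (n + 2))"
proof -
  have "real_of_int (D (n + 1)) ^ 2 = 1"
    using D_square[of "n + 1"] by (metis of_int_eq_1_iff of_int_power)
  then show ?thesis
    by (simp add: T_def)
qed

lemma T_double_plus_one: "T (2 * n + 1) = - T (2 * n)"
proof -
  have index: "2 * n + 1 + 2 = 2 * (n + 1) + 1" "2 * n + 2 = 2 * (n + 1)"
      "(n + 1 + 1) div 2 = n div 2 + 1"
    by simp_all
  show ?thesis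
    unfolding T_eq_D index D_double_Suc D_double by (simp add: algebra_simps)
qed

lemma T_double_plus_two: "T (2 * n + 2) = T (2 * n + 1) * T n"
proof -
  have index: "2 * n + 2 = 2 * (n + 1)" "2 * (n + 1) + 2 = 2 * (n + 2)"
      "2 * n + 1 + 2 = 2 * (n + 1) + 1" "n + 1 + 1 = n + 2"
    by simp_all
  have "D n * D n = 1"
    using D_square[of n] by (simp add: power2_eq_square)
  then have "D (2 * n + 2) * D (2 * n + 2 + 2) = D n * D n * (D (2 * n + 2) * D (2 * n + 2 + 2))"
    by simp
  also have "\<dots> = D (2 * n + 1) * D (2 * n + 1 + 2) * (D n * D (n + 2))"
    unfolding index D_double_Suc D_double by (simp add: ac_simps)
  finally show ?thesis
    by (simp only: T_eq_D of_int_mult[symmetric])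
qed

lemma D_initial_values: "D 0 = 1" "D 1 = 1" "D 2 = 1" "D 3 = -1"
proof -
  show D_0: "D 0 = 1"
    by (simp add: D_def)
  then show D_1: "D 1 = 1"
    using D_double_Suc[of 0] by simp
  then show "D 2 = 1"
    using D_double[of 1] by simp
  from D_1 show "D 3 = -1"
    using D_double_Suc[of 1] by simp
qed

lemma T_0: "T 0 = 1"
  using T_eq_D[of 0] D_initial_values by (simp only: add_0)

lemma T_1: "T 1 = -1"
  using T_eq_D[of 1] D_initial_values by (simp only: one_plus_numeral add_num_simps)

theorem theorem2p6:
  shows "T 0 = 1 \<and> T 1 = -1 \<and>
         (\<forall>n::nat. n \<ge> 1 \<longrightarrow> T (2 * n) = T (2 * n - 1) * T (n - 1)) \<and>
         (\<forall>n::nat. T (2 * n + 1) = - T (2 * n))"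
proof (intro conjI allI impI T_0 T_1 T_double_plus_one)
  fix n :: nat
  assume "n \<ge> 1"
  then have index: "2 * (n - 1) + 2 = 2 * n" "2 * (n - 1) + 1 = 2 * n - 1"
    by simp_all
  show "T (2 * n) = T (2 * n - 1) * T (n - 1)"
    using T_double_plus_two[of "n - 1"] unfolding index .
qed

end
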